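(* Let $\mathcal V$ be a vector space partition of $\mathbb F_2^{10}$ such that $\dim(V)$ is even for all $V\in\mathcal V$. Then $\mathcal V$ has one of the types $[10^1]$; $[2^{256},8^1]$; $[2^{320-5i},4^i,6^1]$ for some $0\le i\le64$; or $[2^{341-5i},4^i]$ for some $0\le i\le66$. Vector space partitions of $\mathbb F_2^{10}$ of each of these types exist, except possibly of type $[2^{11},4^{66}]$.
   Context: A vector space partition of $\mathbb F_2^n$ is a set of nonzero subspaces such that every nonzero vector lies in exactly one of them. It has type $[d_1^{n_1},\dots,d_k^{n_k}]$ (with $d_1<\dots<d_k$) if it contains exactly $n_i$ subspaces of dimension $d_i$ and no others. *)

theory Defs
  imports "HOL-Analysis.Analysis" "HOL-Library.Z2" "HOL-Library.Numeral_Type"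
begin

type_synonym F2_10 = "bit ^ 10"

definition vs_partition :: "F2_10 set set \<Rightarrow> bool" where
  "vs_partition P \<longleftrightarrow>
     (\<forall>V\<in>P. vec.subspace V \<and> V \<noteq> {0}) \<and>
     (\<forall>x::F2_10. x \<noteq> 0 \<longrightarrow> (\<exists>!V. V \<in> P \<and> x \<in> V))"

definition vs_type :: "F2_10 set set \<Rightarrow> nat \<Rightarrow> nat" where
  "vs_type P d = card {V \<in> P. vec.dim V = d}"

end

theory Submission
  imports Defs "HOL-Computational_Algebra.Polynomial_Factorial"
begin

text \<open>
  Counting nonzero vectors gives \<open>3 n\<^sub>2 + 15 n\<^sub>4 + 63 n\<^sub>6 + 255 n\<^sub>8 + 1023 n\<^sub>1\<^sub>0 = 1023\<close>,
  where \<open>n\<^sub>d\<close> is the number of \<open>d\<close>-dimensional members. Distinct members meet only in \<open>0\<close>, so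
  their dimensions add up to at most 10: there is at most one member of dimension \<open>\<ge> 6\<close>, and one
  of dimension 8 excludes dimension 4. If \<open>W\<close> has dimension 6 and \<open>e \<notin> W\<close>, every
  4-dimensional member meets the 7-dimensional span of \<open>W\<close> and \<open>e\<close> in a point of \<open>e + W\<close>,
  so there are at most 64 of them. Without members of dimension \<open>\<ge> 6\<close> the counting identity
  still allows \<open>(n\<^sub>2, n\<^sub>4) = (6, 67)\<close> and \<open>(1, 68)\<close>. These are excluded by counting, for each
  \<open>u\<close>, the points \<open>x\<close> with \<open>u \<bullet> x = 1\<close> on the lines: since \<open>u \<bullet> x = 1\<close> holds on none or on half
  of the points of every subspace, this number is a multiple of 8; it is at most \<open>2 n\<^sub>2\<close>, and its
  sum over all \<open>u\<close> is \<open>1536 n\<^sub>2\<close>.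

  The partitions are built on binary polynomials of degree below 10. For an irreducible \<open>m\<close> of
  degree \<open>n \<ge> k\<close>, the graphs of the multiplications by elements of \<open>\<bbbF>\<^sub>2[x]/(m) = GF(2\<^sup>n)\<close>,
  restricted to the polynomials of degree below \<open>k\<close>, together with \<open>0 \<times> GF(2\<^sup>n)\<close> partition
  \<open>\<bbbF>\<^sub>2\<^bsup>k+n\<^esup>\<close>. Refining blocks of such partitions by smaller ones of the same kind yields
  every type in the list except \<open>[2\<^sup>1\<^sup>1, 4\<^sup>6\<^sup>6]\<close>.
\<close>

section \<open>Subspaces of \<open>\<bbbF>\<^sub>2\<^sup>n\<close>\<close>

lemma UNIV_bit: "(UNIV :: bit set) = {0, 1}"
  by auto

lemma card_UNIV_bit [simp]: "CARD(bit) = 2"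
  by (simp add: UNIV_bit)

instance bit :: finite
  by standard (simp add: UNIV_bit)

lemma vec_bit_add_self [simp]: "(x :: bit ^ 'n) + x = 0"
  by (simp add: vec_eq_iff)

lemma vec_bit_add_cancel_left [simp]: "(x :: bit ^ 'n) + (x + y) = y"
  by (simp add: add.assoc [symmetric])

lemma vec_bit_diff [simp]: "(x :: bit ^ 'n) - y = x + y"
  by (simp add: vec_eq_iff)

definition add_submonoid :: "'a::monoid_add set \<Rightarrow> bool" where
  "add_submonoid V \<longleftrightarrow> 0 \<in> V \<and> (\<forall>x\<in>V. \<forall>y\<in>V. x + y \<in> V)"

lemma subspace_iff_add_submonoid: "vec.subspace V \<longleftrightarrow> add_submonoid (V :: (bit ^ 'n) set)"
proof
  assume "vec.subspace V"
  then show "add_submonoid V"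
    by (simp add: vec.subspace_def add_submonoid_def)
next
  assume "add_submonoid V"
  moreover have "c *s x = (if c = 0 then 0 else x)" for c :: bit and x :: "bit ^ 'n"
    by (cases "c = 0") auto
  ultimately show "vec.subspace V"
    by (simp add: vec.subspace_def add_submonoid_def)
qed

lemma span_insert_bit:
  fixes b :: "bit ^ 'n"
  shows "vec.span (insert b B) = vec.span B \<union> (+) b ` vec.span B"
proof
  show "vec.span (insert b B) \<subseteq> vec.span B \<union> (+) b ` vec.span B"
  proof
    fix x assume "x \<in> vec.span (insert b B)"
    then obtain k where k: "x - k *s b \<in> vec.span B"
      by (auto simp: vec.span_insert)
    show "x \<in> vec.span B \<union> (+) b ` vec.span B"
    proof (cases "k = 0")
      case True
      then show ?thesis
        using k by simp
    next
      case False
      then have "b + x \<in> vec.span B"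
        using k by (simp add: add.commute)
      then show ?thesis
        by (metis UnI2 image_eqI vec_bit_add_cancel_left)
    qed
  qed
qed (auto intro: vec.span_mono [THEN subsetD] vec.span_add vec.span_base)

lemma card_span_independent:
  fixes B :: "(bit ^ 'n) set"
  assumes "vec.independent B"
  shows "card (vec.span B) = 2 ^ card B"
proof -
  have "finite B"
    by simp
  then show ?thesis
    using assms
  proof (induction B rule: finite_induct)
    case empty
    then show ?case
      by simp
  next
    case (insert b B)
    have "vec.independent B" and b_notin: "b \<notin> vec.span B"
      using insert.prems insert.hyps by (auto simp: vec.independent_insert)
    have "b + y \<notin> vec.span B" if "y \<in> vec.span B" for y
    proof
      assume "b + y \<in> vec.span B"
      then have "(b + y) + y \<in> vec.span B"
        using that by (rule vec.span_add)
      then show False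
        using b_notin by (simp add: add.assoc)
    qed
    then have "vec.span B \<inter> (+) b ` vec.span B = {}"
      by blast
    then have "card (vec.span (insert b B)) = card (vec.span B) + card ((+) b ` vec.span B)"
      unfolding span_insert_bit by (simp add: card_Un_disjoint)
    also have "card ((+) b ` vec.span B) = card (vec.span B)"
      by (simp add: card_image)
    finally show ?case
      using insert \<open>vec.independent B\<close> by simp
  qed
qed

lemma card_subspace:
  fixes V :: "(bit ^ 'n) set"
  assumes "vec.subspace V"
  shows "card V = 2 ^ vec.dim V"
proof -
  obtain B where "B \<subseteq> V" "vec.independent B" "V \<subseteq> vec.span B" "card B = vec.dim V"
    using vec.basis_exists by blast
  moreover from this have "vec.span B = V"
    using assms vec.span_subspace by blast
  ultimately show ?thesis
    using card_span_independent [of B] by simp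
qed

lemma dim_add_dim_le_if_inter_zero:
  fixes V W :: "('a::field ^ 'n) set"
  assumes "vec.subspace V" "vec.subspace W" "V \<inter> W = {0}"
  shows "vec.dim V + vec.dim W \<le> CARD('n)"
proof -
  have "vec.dim (V \<inter> W) = 0"
    using assms(3) by simp
  then show ?thesis
    using vec.dim_sums_Int [OF assms(1,2)] dim_subset_UNIV_cart_gen [of "{x + y |x y. x \<in> V \<and> y \<in> W}"]
    by linarith
qed

lemma dim_span_insert_subspace:
  fixes W :: "('a::field ^ 'n) set"
  assumes "vec.subspace W" "e \<notin> W"
  shows "vec.dim (vec.span (insert e W)) = vec.dim W + 1"
proof -
  have span_W: "vec.span W = W"
    using assms(1) by (rule vec.span_eq_iff [THEN iffD2])
  have "e \<notin> vec.span W"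
    unfolding span_W by (fact assms(2))
  then show ?thesis
    by (simp add: vec.dim_insert)
qed

lemma card_preimage_one_eq_half:
  fixes f :: "'a::ab_group_add \<Rightarrow> bit" and V :: "'a set"
  assumes "add_submonoid V" "finite V" and f_add: "\<And>x y. f (x + y) = f x + f y"
    and char_2: "\<And>x::'a. x + x = 0" and "\<exists>v\<in>V. f v = 1"
  shows "2 * card {x\<in>V. f x = 1} = card V"
proof -
  obtain v where v: "v \<in> V" "f v = 1"
    using assms(5) by blast
  let ?V1 = "{x\<in>V. f x = 1}" and ?V0 = "{x\<in>V. f x = 0}"
  have cancel: "v + (v + y) = y" for y
    using char_2 [of v] by (simp add: add.assoc [symmetric])
  have image_V0: "(+) v ` ?V0 = ?V1"
  proof
    show "(+) v ` ?V0 \<subseteq> ?V1"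
      using v assms(1) f_add by (auto simp: add_submonoid_def)
    show "?V1 \<subseteq> (+) v ` ?V0"
    proof
      fix y assume "y \<in> ?V1"
      then have "v + y \<in> ?V0"
        using v assms(1) f_add by (auto simp: add_submonoid_def)
      then show "y \<in> (+) v ` ?V0"
        by (metis cancel image_eqI)
    qed
  qed
  have "card ?V1 = card ?V0"
    unfolding image_V0 [symmetric] by (simp add: card_image)
  moreover have "card V = card ?V0 + card ?V1"
  proof -
    have "card (?V0 \<union> ?V1) = card ?V0 + card ?V1"
      by (rule card_Un_disjoint) (use assms(2) in auto)
    moreover have "?V0 \<union> ?V1 = V"
      by auto
    ultimately show ?thesis
      by simp
  qed
  ultimately show ?thesis
    by simp
qed

definition dot :: "'a::comm_semiring_0 ^ 'n \<Rightarrow> 'a ^ 'n \<Rightarrow> 'a" where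
  "dot u x = (\<Sum>i\<in>UNIV. u $ i * x $ i)"

lemma dot_commute: "dot u x = dot x u"
  unfolding dot_def by (simp only: mult.commute)

lemma dot_add_right: "dot u (x + y) = dot u x + dot u y"
  unfolding dot_def by (simp add: distrib_left sum.distrib)

lemma dot_zero_right [simp]: "dot u 0 = 0"
  by (simp add: dot_def)

lemma dot_axis_left: "dot (axis i 1) (x :: 'a::comm_semiring_1 ^ 'n) = x $ i"
proof -
  have "dot (axis i 1) x = (\<Sum>j\<in>UNIV. if j = i then x $ j else 0)"
    unfolding dot_def axis_def by (rule sum.cong) auto
  then show ?thesis
    by simp
qed

lemma card_dot_eq_one:
  fixes x :: "bit ^ 'n"
  assumes "x \<noteq> 0"
  shows "2 * card {u. dot u x = 1} = CARD(bit ^ 'n)"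
proof -
  obtain i where "x $ i \<noteq> 0"
    using assms by (auto simp: vec_eq_iff)
  then have "dot (axis i 1) x = 1"
    by (simp add: dot_axis_left)
  then show ?thesis
    using card_preimage_one_eq_half [of UNIV "\<lambda>u. dot u x"]
    by (auto simp: add_submonoid_def dot_commute [of _ x] dot_add_right)
qed

lemma sum_card_dot_eq_one:
  fixes V :: "(bit ^ 'n) set"
  assumes "0 \<in> V"
  shows "2 * (\<Sum>u\<in>UNIV. card {x\<in>V. dot u x = 1}) = CARD(bit ^ 'n) * (card V - 1)"
proof -
  have "(\<Sum>u\<in>UNIV. card {x\<in>V. dot u x = 1}) = (\<Sum>x\<in>V. card {u\<in>UNIV. dot u x = 1})"
    using sum.swap_restrict [of UNIV V "\<lambda>_ _. 1::nat" "\<lambda>u x. dot u x = 1"] by simp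
  then have "2 * (\<Sum>u\<in>UNIV. card {x\<in>V. dot u x = 1}) = (\<Sum>x\<in>V. 2 * card {u. dot u x = 1})"
    by (simp add: sum_distrib_left)
  also have "\<dots> = (\<Sum>x\<in>V - {0}. CARD(bit ^ 'n))"
    using assms by (simp add: sum.remove card_dot_eq_one)
  also have "\<dots> = CARD(bit ^ 'n) * (card V - 1)"
    using assms by simp
  finally show ?thesis .
qed

section \<open>Partitions into subspaces\<close>

definition space_partition :: "'a::monoid_add set \<Rightarrow> 'a set set \<Rightarrow> bool" where
  "space_partition S P \<longleftrightarrow>
     (\<forall>V\<in>P. add_submonoid V \<and> V \<noteq> {0} \<and> V \<subseteq> S) \<and> (\<forall>x\<in>S. x \<noteq> 0 \<longrightarrow> (\<exists>!V. V \<in> P \<and> x \<in> V))"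

text \<open>Over \<open>\<bbbF>\<^sub>2\<close> the \<open>d\<close>-dimensional blocks are those with \<open>2 ^ d\<close> elements; counting by
  cardinality also makes sense for the polynomial model used in the construction.\<close>
definition space_type :: "'a set set \<Rightarrow> nat \<Rightarrow> nat" where
  "space_type P d = card {V\<in>P. card V = 2 ^ d}"

lemma space_partitionI:
  assumes "\<And>V. V \<in> P \<Longrightarrow> add_submonoid V \<and> V \<noteq> {0} \<and> V \<subseteq> S"
    and "\<And>x. x \<in> S \<Longrightarrow> x \<noteq> 0 \<Longrightarrow> \<exists>V\<in>P. x \<in> V"
    and "\<And>V W x. V \<in> P \<Longrightarrow> W \<in> P \<Longrightarrow> x \<in> V \<Longrightarrow> x \<in> W \<Longrightarrow> x \<noteq> 0 \<Longrightarrow> V = W"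
  shows "space_partition S P"
  unfolding space_partition_def
proof (intro conjI)
  show "\<forall>V\<in>P. add_submonoid V \<and> V \<noteq> {0} \<and> V \<subseteq> S"
    using assms(1) by blast
  show "\<forall>x\<in>S. x \<noteq> 0 \<longrightarrow> (\<exists>!V. V \<in> P \<and> x \<in> V)"
  proof (intro ballI impI)
    fix x assume "x \<in> S" "x \<noteq> 0"
    then obtain V where V: "V \<in> P" "x \<in> V"
      using assms(2) by blast
    show "\<exists>!V. V \<in> P \<and> x \<in> V"
    proof (rule ex1I)
      show "V \<in> P \<and> x \<in> V"
        using V by blast
      fix W assume "W \<in> P \<and> x \<in> W"
      then show "W = V"
        using assms(3) V \<open>x \<noteq> 0\<close> by blast
    qed
  qed
qed

lemma space_partition_memberD:
  assumes "space_partition S P" "V \<in> P"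
  shows "add_submonoid V" "V \<noteq> {0}" "V \<subseteq> S"
  using assms by (simp_all add: space_partition_def)

lemma space_partition_cover:
  assumes "space_partition S P" "x \<in> S" "x \<noteq> 0"
  obtains V where "V \<in> P" "x \<in> V"
proof -
  have "\<exists>!V. V \<in> P \<and> x \<in> V"
    using assms by (simp add: space_partition_def)
  then show ?thesis
    using that by blast
qed

lemma space_partition_unique:
  assumes "space_partition S P" "V \<in> P" "W \<in> P" "x \<in> V" "x \<in> W" "x \<noteq> 0"
  shows "V = W"
proof -
  have "x \<in> S"
    using space_partition_memberD(3) [OF assms(1,2)] assms(4) by blast
  then have "\<exists>!U. U \<in> P \<and> x \<in> U"
    using assms(1,6) by (simp add: space_partition_def)
  then obtain U where "\<And>Y. Y \<in> P \<and> x \<in> Y \<Longrightarrow> Y = U"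
    by blast
  then show ?thesis
    using assms(2-5) by blast
qed

lemma space_partition_inter:
  assumes "space_partition S P" "V \<in> P" "W \<in> P" "V \<noteq> W"
  shows "V \<inter> W = {0}"
  using space_partition_unique [OF assms(1-3)] assms(4)
    space_partition_memberD(1) [OF assms(1,2)] space_partition_memberD(1) [OF assms(1,3)]
  by (auto simp: add_submonoid_def)

lemma finite_space_partition:
  assumes "space_partition S P" "finite S"
  shows "finite P"
proof (rule finite_subset)
  show "P \<subseteq> Pow S"
    using space_partition_memberD(3) [OF assms(1)] by blast
qed (simp add: assms(2))

lemma card_filter_space_partition:
  assumes "space_partition S P" "finite S" "\<not> Q 0"
  shows "card {x\<in>S. Q x} = (\<Sum>V\<in>P. card {x\<in>V. Q x})"
proof -
  have "{x\<in>S. Q x} = (\<Union>V\<in>P. {x\<in>V. Q x})"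
  proof
    show "{x\<in>S. Q x} \<subseteq> (\<Union>V\<in>P. {x\<in>V. Q x})"
    proof
      fix x assume x: "x \<in> {x\<in>S. Q x}"
      then have "x \<noteq> 0"
        using assms(3) by auto
      then obtain V where "V \<in> P" "x \<in> V"
        using space_partition_cover [OF assms(1), of x] x by auto
      then show "x \<in> (\<Union>V\<in>P. {x\<in>V. Q x})"
        using x by blast
    qed
    show "(\<Union>V\<in>P. {x\<in>V. Q x}) \<subseteq> {x\<in>S. Q x}"
      using space_partition_memberD(3) [OF assms(1)] by blast
  qed
  also have "card \<dots> = (\<Sum>V\<in>P. card {x\<in>V. Q x})"
  proof (rule card_UN_disjoint)
    show "finite P"
      using assms(1,2) by (rule finite_space_partition)
    show "\<forall>V\<in>P. finite {x\<in>V. Q x}"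
    proof
      fix V assume "V \<in> P"
      then have "V \<subseteq> S"
        by (rule space_partition_memberD(3) [OF assms(1)])
      then have "finite V"
        using assms(2) by (rule finite_subset)
      then show "finite {x\<in>V. Q x}"
        by simp
    qed
    show "\<forall>V\<in>P. \<forall>W\<in>P. V \<noteq> W \<longrightarrow> {x\<in>V. Q x} \<inter> {x\<in>W. Q x} = {}"
    proof (intro ballI impI)
      fix V W assume "V \<in> P" "W \<in> P" "V \<noteq> W"
      then have "V \<inter> W = {0}"
        by (rule space_partition_inter [OF assms(1)])
      moreover have "{x\<in>V. Q x} \<inter> {x\<in>W. Q x} = {x\<in>V \<inter> W. Q x}"
        by blast
      ultimately show "{x\<in>V. Q x} \<inter> {x\<in>W. Q x} = {}"
        using assms(3) by simp
    qed
  qed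
  finally show ?thesis .
qed

lemma card_Diff_zero_space_partition:
  assumes "space_partition S P" "finite S"
  shows "card (S - {0}) = (\<Sum>V\<in>P. card V - 1)"
proof -
  have "card (S - {0}) = (\<Sum>V\<in>P. card {x\<in>V. x \<noteq> 0})"
    using card_filter_space_partition [OF assms, of "\<lambda>x. x \<noteq> 0"] by (simp add: set_diff_eq)
  also have "\<dots> = (\<Sum>V\<in>P. card V - 1)"
  proof (rule sum.cong [OF refl])
    fix V assume "V \<in> P"
    then have "0 \<in> V" "V \<subseteq> S"
      using space_partition_memberD [OF assms(1)] by (auto simp: add_submonoid_def)
    moreover have "{x\<in>V. x \<noteq> 0} = V - {0}"
      by blast
    ultimately show "card {x\<in>V. x \<noteq> 0} = card V - 1"
      using assms(2) finite_subset by (simp add: card_Diff_singleton)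
  qed
  finally show ?thesis .
qed

lemma vs_partition_iff_space_partition: "vs_partition P \<longleftrightarrow> space_partition UNIV P"
  unfolding vs_partition_def space_partition_def subspace_iff_add_submonoid by simp

lemma vs_type_eq_space_type:
  assumes "vs_partition P"
  shows "vs_type P = space_type P"
proof
  fix d
  have "card V = 2 ^ d \<longleftrightarrow> vec.dim V = d" if "V \<in> P" for V
  proof -
    have "card V = 2 ^ vec.dim V"
      using assms that by (simp add: vs_partition_def card_subspace)
    then show ?thesis
      by simp
  qed
  then have "{V\<in>P. vec.dim V = d} = {V\<in>P. card V = 2 ^ d}"
    by blast
  then show "vs_type P d = space_type P d"
    by (simp add: vs_type_def space_type_def)
qed

lemma space_type_Un:
  assumes "A \<inter> B = {}" "finite A" "finite B"
  shows "space_type (A \<union> B) d = space_type A d + space_type B d"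
proof -
  have "{V\<in>A \<union> B. card V = 2 ^ d} = {V\<in>A. card V = 2 ^ d} \<union> {V\<in>B. card V = 2 ^ d}"
    by blast
  then show ?thesis
    unfolding space_type_def using assms by (simp add: card_Un_disjoint disjoint_iff)
qed

lemma space_type_Diff:
  assumes "B \<subseteq> A" "finite A"
  shows "space_type (A - B) d = space_type A d - space_type B d"
proof -
  have "{V\<in>A - B. card V = 2 ^ d} = {V\<in>A. card V = 2 ^ d} - {V\<in>B. card V = 2 ^ d}"
    by blast
  moreover have "{V\<in>B. card V = 2 ^ d} \<subseteq> {V\<in>A. card V = 2 ^ d}"
    using assms(1) by blast
  ultimately show ?thesis
    unfolding space_type_def using assms by (simp add: card_Diff_subset finite_subset)
qed

lemma space_type_const:
  assumes "\<And>V. V \<in> A \<Longrightarrow> card V = 2 ^ s"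
  shows "space_type A d = (if d = s then card A else 0)"
proof -
  have "{V\<in>A. card V = 2 ^ d} = (if d = s then A else {})"
    using assms by auto
  then show ?thesis
    by (simp add: space_type_def)
qed

lemma add_submonoid_image:
  fixes \<phi> :: "'a::monoid_add \<Rightarrow> 'b::monoid_add"
  assumes "\<And>x y. \<phi> (x + y) = \<phi> x + \<phi> y" "\<phi> 0 = 0" "add_submonoid V"
  shows "add_submonoid (\<phi> ` V)"
  using assms(2,3) unfolding add_submonoid_def by (auto simp: assms(1) [symmetric] image_iff)

lemma space_partition_image:
  fixes \<phi> :: "'a::monoid_add \<Rightarrow> 'b::ab_group_add"
  assumes add: "\<And>x y. \<phi> (x + y) = \<phi> x + \<phi> y" and inj: "inj_on \<phi> S"
    and partition: "space_partition S P"
  shows "space_partition (\<phi> ` S) ((`) \<phi> ` P)"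
proof -
  have zero: "\<phi> 0 = 0"
    using add [of 0 0] by simp
  have member: "add_submonoid V" "V \<subseteq> S" "0 \<in> V" if "V \<in> P" for V
    using space_partition_memberD [OF partition that] by (simp_all add: add_submonoid_def)
  have nonzero: "\<phi> x \<noteq> 0" if "x \<in> V" "V \<in> P" "x \<noteq> 0" for x V
  proof
    assume "\<phi> x = 0"
    then have "\<phi> x = \<phi> 0"
      by (simp add: zero)
    then show False
      using inj_onD [OF inj] member(2,3) [OF that(2)] that by blast
  qed
  show ?thesis
  proof (rule space_partitionI)
    fix W assume "W \<in> (`) \<phi> ` P"
    then obtain V where V: "V \<in> P" "W = \<phi> ` V"
      by blast
    have "add_submonoid W"
      unfolding V(2) by (rule add_submonoid_image [OF add zero member(1) [OF V(1)]])
    moreover obtain v where "v \<in> V" "v \<noteq> 0"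
      using space_partition_memberD(2) [OF partition V(1)] member(3) [OF V(1)] by blast
    then have "W \<noteq> {0}"
      using nonzero [OF _ V(1)] V(2) by blast
    moreover have "W \<subseteq> \<phi> ` S"
      using member(2) [OF V(1)] V(2) by blast
    ultimately show "add_submonoid W \<and> W \<noteq> {0} \<and> W \<subseteq> \<phi> ` S"
      by blast
  next
    fix y assume "y \<in> \<phi> ` S" "y \<noteq> 0"
    then obtain x where x: "x \<in> S" "y = \<phi> x"
      by blast
    then have "x \<noteq> 0"
      using \<open>y \<noteq> 0\<close> zero by auto
    then obtain V where "V \<in> P" "x \<in> V"
      using space_partition_cover [OF partition x(1)] by blast
    then show "\<exists>W\<in>(`) \<phi> ` P. y \<in> W"
      using x(2) by blast
  next
    fix W W' y assume "W \<in> (`) \<phi> ` P" "W' \<in> (`) \<phi> ` P" "y \<in> W" "y \<in> W'" "y \<noteq> 0"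
    then obtain V V' a b where V: "V \<in> P" "W = \<phi> ` V" and V': "V' \<in> P" "W' = \<phi> ` V'"
      and ab: "a \<in> V" "b \<in> V'" "y = \<phi> a" "y = \<phi> b"
      by blast
    then have "a = b"
      using inj_onD [OF inj] member(2) by blast
    moreover have "a \<noteq> 0"
      using ab(3) \<open>y \<noteq> 0\<close> zero by auto
    ultimately have "V = V'"
      using space_partition_unique [OF partition V(1) V'(1)] ab by blast
    then show "W = W'"
      using V V' by simp
  qed
qed

lemma space_type_image:
  assumes inj: "inj_on \<phi> S" and partition: "space_partition S P"
  shows "space_type ((`) \<phi> ` P) d = space_type P d"
proof -
  have sub: "V \<subseteq> S" if "V \<in> P" for V
    using space_partition_memberD(3) [OF partition that] .
  have inj_image: "inj_on ((`) \<phi>) P"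
  proof (rule inj_onI)
    fix V W assume "V \<in> P" "W \<in> P" "\<phi> ` V = \<phi> ` W"
    then show "V = W"
      using inj_on_image_eq_iff [OF inj] sub by blast
  qed
  have "card (\<phi> ` V) = card V" if "V \<in> P" for V
    using card_image [OF inj_on_subset [OF inj sub [OF that]]] .
  then have "{W\<in>(`) \<phi> ` P. card W = 2 ^ d} = (`) \<phi> ` {V\<in>P. card V = 2 ^ d}"
    by auto
  moreover have "card ((`) \<phi> ` {V\<in>P. card V = 2 ^ d}) = card {V\<in>P. card V = 2 ^ d}"
    by (rule card_image) (rule inj_on_subset [OF inj_image], auto)
  ultimately show ?thesis
    by (simp add: space_type_def)
qed

context
  fixes S :: "'a::monoid_add set" and P :: "'a set set" and I :: "'i set"
    and V :: "'i \<Rightarrow> 'a set" and Q :: "'i \<Rightarrow> 'a set set"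
  assumes partition: "space_partition S P" and V_in: "V ` I \<subseteq> P" and inj_V: "inj_on V I"
    and partition_Q: "\<And>i. i \<in> I \<Longrightarrow> space_partition (V i) (Q i)"
begin

lemma refinement_block_subset: "i \<in> I \<Longrightarrow> W \<in> Q i \<Longrightarrow> W \<subseteq> V i"
  using space_partition_memberD(3) [OF partition_Q] by blast

lemma refinement_block_nonzero:
  assumes "i \<in> I" "W \<in> Q i"
  obtains w where "w \<in> W" "w \<noteq> 0"
  using space_partition_memberD(1,2) [OF partition_Q [OF assms(1)] assms(2)]
  unfolding add_submonoid_def by blast

lemma refinement_block_notin: "i \<in> I \<Longrightarrow> W \<in> Q i \<Longrightarrow> W \<notin> P - V ` I"
proof
  assume i: "i \<in> I" and W: "W \<in> Q i" and W_in: "W \<in> P - V ` I"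
  obtain w where w: "w \<in> W" "w \<noteq> 0"
    using refinement_block_nonzero [OF i W] by blast
  then have "W = V i"
    using space_partition_unique [OF partition, of W "V i" w] refinement_block_subset [OF i W] W_in V_in i
    by blast
  then show False
    using W_in i by blast
qed

lemma refinement_block_index_unique:
  assumes "i \<in> I" "j \<in> I" "W \<in> Q i" "W \<in> Q j"
  shows "i = j"
proof -
  obtain w where w: "w \<in> W" "w \<noteq> 0"
    using refinement_block_nonzero [OF assms(1,3)] by blast
  then have "V i = V j"
    using space_partition_unique [OF partition, of "V i" "V j" w] V_in assms
      refinement_block_subset [OF assms(1,3)] refinement_block_subset [OF assms(2,4)]
    by blast
  then show ?thesis
    using inj_onD [OF inj_V] assms(1,2) by blast
qed

lemma refinement_unique:
  assumes W: "W \<in> (P - V ` I) \<union> (\<Union>i\<in>I. Q i)" and W': "W' \<in> (P - V ` I) \<union> (\<Union>i\<in>I. Q i)"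
    and x: "x \<in> W" "x \<in> W'" "x \<noteq> 0"
  shows "W = W'"
proof -
  have in_block: "y \<in> V i" if "i \<in> I" "Y \<in> Q i" "y \<in> Y" for i Y y
    using refinement_block_subset that by blast
  have unique: "U = U'" if "U \<in> P" "U' \<in> P" "x \<in> U" "x \<in> U'" for U U'
    using space_partition_unique [OF partition] that x(3) by blast
  consider "W \<in> P - V ` I" "W' \<in> P - V ` I"
    | i where "i \<in> I" "W \<in> Q i" "W' \<in> P - V ` I"
    | j where "j \<in> I" "W \<in> P - V ` I" "W' \<in> Q j"
    | i j where "i \<in> I" "j \<in> I" "W \<in> Q i" "W' \<in> Q j"
    using W W' by blast
  then show ?thesis
  proof cases
    case 1
    then show ?thesis
      using unique x by blast
  next
    case (2 i)
    then have "V i = W'"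
      using unique [of "V i" W'] in_block [of i W x] V_in x by blast
    then show ?thesis
      using 2 by blast
  next
    case (3 j)
    then have "W = V j"
      using unique [of W "V j"] in_block [of j W' x] V_in x by blast
    then show ?thesis
      using 3 by blast
  next
    case (4 i j)
    then have "V i = V j"
      using unique [of "V i" "V j"] in_block [of i W x] in_block [of j W' x] V_in x by blast
    then have "i = j"
      using inj_onD [OF inj_V] 4(1,2) by blast
    then show ?thesis
      using space_partition_unique [OF partition_Q [OF 4(1)], of W W' x] 4 x by blast
  qed
qed

lemma space_partition_refine: "space_partition S ((P - V ` I) \<union> (\<Union>i\<in>I. Q i))"
proof (rule space_partitionI)
  fix W assume "W \<in> (P - V ` I) \<union> (\<Union>i\<in>I. Q i)"
  then show "add_submonoid W \<and> W \<noteq> {0} \<and> W \<subseteq> S"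
  proof
    assume "W \<in> P - V ` I"
    then show ?thesis
      using space_partition_memberD [OF partition] by blast
  next
    assume "W \<in> (\<Union>i\<in>I. Q i)"
    then obtain i where i: "i \<in> I" "W \<in> Q i"
      by blast
    have "V i \<subseteq> S"
      using space_partition_memberD(3) [OF partition] V_in i(1) by blast
    then show ?thesis
      using space_partition_memberD [OF partition_Q [OF i(1)] i(2)] by blast
  qed
next
  fix x assume x: "x \<in> S" "x \<noteq> 0"
  obtain U where U: "U \<in> P" "x \<in> U"
    using space_partition_cover [OF partition x] by blast
  show "\<exists>W\<in>(P - V ` I) \<union> (\<Union>i\<in>I. Q i). x \<in> W"
  proof (cases "U \<in> V ` I")
    case True
    then obtain i where i: "i \<in> I" "U = V i"
      by blast
    obtain W where "W \<in> Q i" "x \<in> W"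
      using space_partition_cover [OF partition_Q [OF i(1)], of x] U(2) i(2) x(2) by blast
    then show ?thesis
      using i(1) by blast
  next
    case False
    then show ?thesis
      using U by blast
  qed
next
  fix W W' x assume "W \<in> (P - V ` I) \<union> (\<Union>i\<in>I. Q i)" "W' \<in> (P - V ` I) \<union> (\<Union>i\<in>I. Q i)"
    "x \<in> W" "x \<in> W'" "x \<noteq> 0"
  then show "W = W'"
    by (rule refinement_unique)
qed

lemma space_type_refine:
  assumes "finite P" "finite I" "\<And>i. i \<in> I \<Longrightarrow> finite (Q i)"
  shows "space_type ((P - V ` I) \<union> (\<Union>i\<in>I. Q i)) d
    = space_type P d - space_type (V ` I) d + (\<Sum>i\<in>I. space_type (Q i) d)"
proof -
  have "(P - V ` I) \<inter> (\<Union>i\<in>I. Q i) = {}"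
    using refinement_block_notin by blast
  then have "space_type ((P - V ` I) \<union> (\<Union>i\<in>I. Q i)) d
      = space_type (P - V ` I) d + space_type (\<Union>i\<in>I. Q i) d"
    by (rule space_type_Un) (use assms in auto)
  also have "space_type (P - V ` I) d = space_type P d - space_type (V ` I) d"
    by (rule space_type_Diff) (use V_in assms(1) in auto)
  also have "space_type (\<Union>i\<in>I. Q i) d = (\<Sum>i\<in>I. space_type (Q i) d)"
  proof -
    have "{W\<in>(\<Union>i\<in>I. Q i). card W = 2 ^ d} = (\<Union>i\<in>I. {W\<in>Q i. card W = 2 ^ d})"
      by blast
    then have "space_type (\<Union>i\<in>I. Q i) d = card (\<Union>i\<in>I. {W\<in>Q i. card W = 2 ^ d})"
      by (simp add: space_type_def)
    also have "\<dots> = (\<Sum>i\<in>I. card {W\<in>Q i. card W = 2 ^ d})"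
    proof (rule card_UN_disjoint)
      show "finite I" "\<forall>i\<in>I. finite {W\<in>Q i. card W = 2 ^ d}"
        using assms by auto
      show "\<forall>i\<in>I. \<forall>j\<in>I. i \<noteq> j \<longrightarrow> {W\<in>Q i. card W = 2 ^ d} \<inter> {W\<in>Q j. card W = 2 ^ d} = {}"
        using refinement_block_index_unique by blast
    qed
    finally show ?thesis
      by (simp add: space_type_def)
  qed
  finally show ?thesis .
qed

end

lemma space_partition_replace:
  assumes "space_partition S P" "U \<in> P" "space_partition U Q"
  shows "space_partition S ((P - {U}) \<union> Q)"
  using space_partition_refine [where I = "{U}" and V = id and Q = "\<lambda>_. Q"] assms by simp

lemma space_type_replace:
  assumes "space_partition S P" "U \<in> P" "space_partition U Q" "finite P" "finite Q"
    and "card U = 2 ^ s"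
  shows "space_type ((P - {U}) \<union> Q) d = space_type P d - (if d = s then 1 else 0) + space_type Q d"
proof -
  have "{V\<in>{U}. card V = 2 ^ d} = (if d = s then {U} else {})"
    using assms(6) by auto
  then have "space_type {U} d = (if d = s then 1 else 0)"
    by (simp add: space_type_def)
  then show ?thesis
    using space_type_refine [where I = "{U}" and V = id and Q = "\<lambda>_. Q" and d = d] assms by simp
qed

section \<open>Types of partitions of \<open>\<bbbF>\<^sub>2\<^sup>1\<^sup>0\<close> into even-dimensional subspaces\<close>

locale even_vs_partition =
  fixes P :: "F2_10 set set"
  assumes vs_partition: "vs_partition P" and even_dim: "\<forall>V\<in>P. even (vec.dim V)"
begin

lemma space_partition_UNIV: "space_partition UNIV P"
  using vs_partition by (simp add: vs_partition_iff_space_partition)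

lemma finite_partition: "finite P"
  using space_partition_UNIV by (rule finite_space_partition) simp

lemma subspace: "V \<in> P \<Longrightarrow> vec.subspace V"
  using vs_partition by (simp add: vs_partition_def)

lemma card_member: "V \<in> P \<Longrightarrow> card V = 2 ^ vec.dim V"
  by (simp add: subspace card_subspace)

lemma dim_add_dim_le:
  assumes "V \<in> P" "W \<in> P" "V \<noteq> W"
  shows "vec.dim V + vec.dim W \<le> 10"
  using dim_add_dim_le_if_inter_zero [OF subspace subspace space_partition_inter [OF space_partition_UNIV]]
    assms by simp

lemma dim_member:
  assumes "V \<in> P"
  shows "vec.dim V \<in> {2, 4, 6, 8, 10}"
proof -
  have "vec.dim V \<le> 10"
    using dim_subset_UNIV_cart_gen [of V] by simp
  moreover have "vec.dim V \<noteq> 0"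
    using space_partition_memberD(2) [OF space_partition_UNIV assms] vec.subspace_0 [OF subspace [OF assms]]
    by (auto simp: subset_singleton_iff)
  moreover have "even (vec.dim V)"
    using even_dim assms by blast
  moreover have "\<And>d::nat. d \<le> 10 \<Longrightarrow> d \<noteq> 0 \<Longrightarrow> even d \<Longrightarrow> d \<in> {2, 4, 6, 8, 10}"
    by (auto elim!: evenE)
  ultimately show ?thesis
    by blast
qed

lemma vs_type_eq_0_iff: "vs_type P d = 0 \<longleftrightarrow> (\<forall>V\<in>P. vec.dim V \<noteq> d)"
  using finite_partition by (auto simp: vs_type_def)

lemma vs_type_eqI:
  assumes "vs_type P 2 = a2" "vs_type P 4 = a4" "vs_type P 6 = a6" "vs_type P 8 = a8"
    "vs_type P 10 = a10"
  shows "vs_type P = (\<lambda>d. if d = 2 then a2 else if d = 4 then a4 else if d = 6 then a6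
    else if d = 8 then a8 else if d = 10 then a10 else 0)"
proof
  fix d
  show "vs_type P d = (if d = 2 then a2 else if d = 4 then a4 else if d = 6 then a6
    else if d = 8 then a8 else if d = 10 then a10 else 0)"
  proof (cases "d \<in> {2, 4, 6, 8, 10}")
    case True
    then show ?thesis
      using assms by auto
  next
    case False
    then have "vs_type P d = 0"
      using dim_member vs_type_eq_0_iff by blast
    then show ?thesis
      using False by simp
  qed
qed

lemma sum_over_dim:
  "(\<Sum>V\<in>P. f (vec.dim V)) = (\<Sum>d\<in>{2, 4, 6, 8, 10}. vs_type P d * f d)"
proof -
  have "(\<Sum>V\<in>P. f (vec.dim V)) = (\<Sum>d\<in>{2, 4, 6, 8, 10}. \<Sum>V\<in>{V\<in>P. vec.dim V = d}. f (vec.dim V))"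
    by (rule sum.group [symmetric]) (use finite_partition dim_member in auto)
  also have "\<dots> = (\<Sum>d\<in>{2, 4, 6, 8, 10}. vs_type P d * f d)"
  proof (rule sum.cong [OF refl])
    fix d :: nat
    have "(\<Sum>V\<in>{V\<in>P. vec.dim V = d}. f (vec.dim V)) = (\<Sum>V\<in>{V\<in>P. vec.dim V = d}. f d)"
      by (rule sum.cong) auto
    then show "(\<Sum>V\<in>{V\<in>P. vec.dim V = d}. f (vec.dim V)) = vs_type P d * f d"
      by (simp add: vs_type_def)
  qed
  finally show ?thesis .
qed

lemma nonzero_vector_count:
  "3 * vs_type P 2 + 15 * vs_type P 4 + 63 * vs_type P 6 + 255 * vs_type P 8
     + 1023 * vs_type P 10 = 1023"
proof -
  have "(\<Sum>V\<in>P. 2 ^ vec.dim V - 1) = card (UNIV - {0 :: F2_10})"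
    using card_Diff_zero_space_partition [OF space_partition_UNIV] by (simp add: card_member)
  also have "\<dots> = 1023"
    by (simp add: card_Diff_singleton)
  finally show ?thesis
    using sum_over_dim [of "\<lambda>d. 2 ^ d - 1"] by simp
qed

lemma vs_type_6_8_10_le_1: "vs_type P 6 + vs_type P 8 + vs_type P 10 \<le> 1"
proof -
  have "card {V\<in>P. 6 \<le> vec.dim V} \<le> 1"
  proof (rule card_le_Suc0_iff_eq [THEN iffD2, unfolded One_nat_def [symmetric]])
    show "finite {V\<in>P. 6 \<le> vec.dim V}"
      using finite_partition by simp
    show "\<forall>V\<in>{V\<in>P. 6 \<le> vec.dim V}. \<forall>W\<in>{V\<in>P. 6 \<le> vec.dim V}. V = W"
    proof (intro ballI)
      fix V W assume V: "V \<in> {V\<in>P. 6 \<le> vec.dim V}" and W: "W \<in> {V\<in>P. 6 \<le> vec.dim V}"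
      show "V = W"
      proof (rule ccontr)
        assume "V \<noteq> W"
        then have "vec.dim V + vec.dim W \<le> 10"
          using V W dim_add_dim_le by blast
        then show False
          using V W by simp
      qed
    qed
  qed
  moreover have "card {V\<in>P. 6 \<le> vec.dim V} = (\<Sum>V\<in>P. if 6 \<le> vec.dim V then 1 else 0)"
    unfolding card_eq_sum by (rule sum.inter_filter [OF finite_partition])
  moreover have "\<dots> = vs_type P 6 + vs_type P 8 + vs_type P 10"
    using sum_over_dim [of "\<lambda>d. if 6 \<le> d then 1 else 0"] by simp
  ultimately show ?thesis
    by simp
qed

lemma vs_type_4_eq_0_if_8:
  assumes "vs_type P 8 \<noteq> 0"
  shows "vs_type P 4 = 0"
proof -
  obtain W where W: "W \<in> P" "vec.dim W = 8"
    using assms by (auto simp: vs_type_eq_0_iff)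
  have "vec.dim V \<noteq> 4" if "V \<in> P" for V
  proof
    assume "vec.dim V = 4"
    moreover from this have "V \<noteq> W"
      using W(2) by auto
    ultimately show False
      using dim_add_dim_le [OF that W(1)] W(2) by simp
  qed
  then show ?thesis
    by (simp add: vs_type_eq_0_iff)
qed

lemma member_meets_span_insert:
  assumes "U \<in> P" "W \<in> P" "U \<noteq> W" "e \<notin> W" "10 \<le> vec.dim U + vec.dim W"
  obtains s where "s \<in> U" "s \<in> vec.span (insert e W) - W"
proof -
  let ?S = "vec.span (insert e W)"
  have "U \<inter> ?S \<noteq> {0}"
  proof
    assume "U \<inter> ?S = {0}"
    then have "vec.dim U + vec.dim ?S \<le> 10"
      using dim_add_dim_le_if_inter_zero [OF subspace [OF assms(1)] vec.subspace_span] by simp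
    then show False
      using dim_span_insert_subspace [OF subspace [OF assms(2)] assms(4)] assms(5) by simp
  qed
  moreover have "0 \<in> U \<inter> ?S"
    using vec.subspace_0 [OF subspace [OF assms(1)]] vec.span_zero by simp
  ultimately obtain s where "s \<in> U" "s \<in> ?S" "s \<noteq> 0"
    by blast
  moreover have "U \<inter> W = {0}"
    by (rule space_partition_inter [OF space_partition_UNIV assms(1-3)])
  ultimately show ?thesis
    using that by blast
qed

lemma vs_type_4_le_64_if_6:
  assumes "vs_type P 6 \<noteq> 0"
  shows "vs_type P 4 \<le> 64"
proof -
  obtain W where W: "W \<in> P" "vec.dim W = 6"
    using assms by (auto simp: vs_type_eq_0_iff)
  have "W \<noteq> UNIV"
    using card_member [OF W(1)] W(2) by auto
  then obtain e where "e \<notin> W"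
    by auto
  define S where "S = vec.span (insert e W)"
  have card_S_W: "card (S - W) = 64"
  proof -
    have "card S = 128"
      using card_subspace [of S] dim_span_insert_subspace [OF subspace [OF W(1)] \<open>e \<notin> W\<close>] W(2)
      by (simp add: S_def)
    moreover have "W \<subseteq> S"
      unfolding S_def using vec.span_superset by blast
    ultimately show ?thesis
      using card_member [OF W(1)] W(2) by (simp add: card_Diff_subset)
  qed
  define \<sigma> where "\<sigma> U = (SOME s. s \<in> U \<inter> (S - W))" for U
  have \<sigma>: "\<sigma> U \<in> U \<inter> (S - W)" if U: "U \<in> {U\<in>P. vec.dim U = 4}" for U
  proof -
    have "U \<in> P" "U \<noteq> W" "10 \<le> vec.dim U + vec.dim W"
      using U W by auto
    then obtain s where "s \<in> U" "s \<in> S - W"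
      unfolding S_def using member_meets_span_insert W(1) \<open>e \<notin> W\<close> by metis
    then have "s \<in> U \<inter> (S - W)"
      by blast
    then show ?thesis
      unfolding \<sigma>_def by (rule someI)
  qed
  have "inj_on \<sigma> {U\<in>P. vec.dim U = 4}"
  proof (rule inj_onI)
    fix U U' assume U: "U \<in> {U\<in>P. vec.dim U = 4}" and U': "U' \<in> {U\<in>P. vec.dim U = 4}"
      and "\<sigma> U = \<sigma> U'"
    moreover have "\<sigma> U \<noteq> 0"
      using \<sigma> [OF U] vec.subspace_0 [OF subspace [OF W(1)]] by auto
    ultimately show "U = U'"
      using space_partition_unique [OF space_partition_UNIV, of U U' "\<sigma> U"] \<sigma> [OF U] \<sigma> [OF U'] by auto
  qed
  moreover have "\<sigma> ` {U\<in>P. vec.dim U = 4} \<subseteq> S - W"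
    using \<sigma> by blast
  ultimately have "card {U\<in>P. vec.dim U = 4} \<le> card (S - W)"
    by (simp add: card_inj_on_le)
  then show ?thesis
    using card_S_W by (simp add: vs_type_def)
qed

definition line_points_off :: "F2_10 \<Rightarrow> nat" where
  "line_points_off u = (\<Sum>V\<in>{V\<in>P. vec.dim V = 2}. card {x\<in>V. dot u x = 1})"

lemma card_dot_eq_one_member:
  assumes "V \<in> P"
  shows "2 * card {x\<in>V. dot u x = 1} \<le> 2 ^ vec.dim V"
    and "2 ^ vec.dim V dvd 2 * card {x\<in>V. dot u x = 1}"
proof -
  \<comment> \<open>Naming the cardinality keeps \<open>simp\<close> from turning \<open>c = 0\<close> into a statement about the set.\<close>
  define c where "c = card {x\<in>V. dot u x = 1}"
  have "c = 0 \<or> 2 * c = 2 ^ vec.dim V"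
  proof (cases "\<exists>v\<in>V. dot u v = 1")
    case True
    then show ?thesis
      using card_preimage_one_eq_half [of V "dot u"] space_partition_memberD(1) [OF space_partition_UNIV assms]
      by (simp add: c_def dot_add_right card_member [OF assms])
  next
    case False
    then have empty: "{x\<in>V. dot u x = 1} = {}"
      by blast
    show ?thesis
      unfolding c_def empty by simp
  qed
  then show "2 * card {x\<in>V. dot u x = 1} \<le> 2 ^ vec.dim V"
    and "2 ^ vec.dim V dvd 2 * card {x\<in>V. dot u x = 1}"
    unfolding c_def [symmetric] by auto
qed

lemma line_points_off_le: "line_points_off u \<le> 2 * vs_type P 2"
proof -
  have "line_points_off u \<le> (\<Sum>V\<in>{V\<in>P. vec.dim V = 2}. 2)"
    unfolding line_points_off_def
  proof (rule sum_mono)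
    fix V assume "V \<in> {V\<in>P. vec.dim V = 2}"
    then show "card {x\<in>V. dot u x = 1} \<le> 2"
      using card_dot_eq_one_member(1) [of V u] by simp
  qed
  then show ?thesis
    by (simp add: vs_type_def)
qed

lemma sum_line_points_off: "(\<Sum>u\<in>UNIV. line_points_off u) = 1536 * vs_type P 2"
proof -
  have "(\<Sum>u\<in>UNIV. line_points_off u)
      = (\<Sum>V\<in>{V\<in>P. vec.dim V = 2}. \<Sum>u\<in>UNIV. card {x\<in>V. dot u x = 1})"
    unfolding line_points_off_def by (rule sum.swap)
  also have "\<dots> = (\<Sum>V\<in>{V\<in>P. vec.dim V = 2}. 1536)"
  proof (rule sum.cong [OF refl])
    fix V assume "V \<in> {V\<in>P. vec.dim V = 2}"
    then have "0 \<in> V" "card V = 4"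
      using vec.subspace_0 [OF subspace] card_member by auto
    then show "(\<Sum>u\<in>UNIV. card {x\<in>V. dot u x = 1}) = 1536"
      using sum_card_dot_eq_one [of V] by simp
  qed
  finally show ?thesis
    by (simp add: vs_type_def)
qed

lemma eight_dvd_line_points_off:
  assumes "vs_type P 6 = 0" "vs_type P 8 = 0" "vs_type P 10 = 0"
  shows "8 dvd line_points_off u"
proof -
  let ?off = "\<lambda>V. card {x\<in>V. dot u x = 1}"
  have P_split: "P = {V\<in>P. vec.dim V = 2} \<union> {V\<in>P. vec.dim V = 4}"
    using dim_member assms by (auto simp: vs_type_eq_0_iff)
  have "card {x\<in>UNIV. dot u x = 1} = (\<Sum>V\<in>P. ?off V)"
    by (rule card_filter_space_partition [OF space_partition_UNIV]) simp_all
  also have "\<dots> = line_points_off u + (\<Sum>V\<in>{V\<in>P. vec.dim V = 4}. ?off V)"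
    unfolding line_points_off_def
    by (rule sum.union_disjoint [of "{V\<in>P. vec.dim V = 2}" "{V\<in>P. vec.dim V = 4}", folded P_split])
      (use finite_partition in auto)
  finally have sum_eq: "card {x. dot u x = 1} = line_points_off u + (\<Sum>V\<in>{V\<in>P. vec.dim V = 4}. ?off V)"
    by simp
  have "8 dvd card {x. dot u x = 1}"
  proof (cases "u = 0")
    case True
    then show ?thesis
      by (simp add: dot_def)
  next
    case False
    then have "2 * card {x. dot x u = 1} = 1024"
      using card_dot_eq_one [of u] by simp
    then show ?thesis
      by (simp add: dot_commute [of _ u])
  qed
  moreover have "8 dvd (\<Sum>V\<in>{V\<in>P. vec.dim V = 4}. ?off V)"
  proof (rule dvd_sum)
    fix V assume "V \<in> {V\<in>P. vec.dim V = 4}"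
    then have "16 dvd 2 * ?off V"
      using card_dot_eq_one_member(2) [of V u] by simp
    then show "8 dvd ?off V"
      by presburger
  qed
  ultimately show ?thesis
    using sum_eq by (simp add: dvd_add_left_iff)
qed

lemma vs_type_4_le_66:
  assumes "vs_type P 6 = 0" "vs_type P 8 = 0" "vs_type P 10 = 0"
  shows "vs_type P 4 \<le> 66"
proof (rule ccontr)
  assume "\<not> ?thesis"
  then have "vs_type P 2 = 1 \<or> vs_type P 2 = 6"
    using nonzero_vector_count assms by presburger
  \<comment> \<open>For \<open>vs_type P 2 \<in> {1, 6}\<close> this bound is 0 resp. 8, too small for the total \<open>1536 * vs_type P 2\<close>.\<close>
  have "line_points_off u \<le> 8 * (vs_type P 2 div 4)" for u
  proof -
    obtain k where "line_points_off u = 8 * k"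
      using eight_dvd_line_points_off [OF assms] by blast
    moreover from this have "4 * k \<le> vs_type P 2"
      using line_points_off_le [of u] by simp
    ultimately show ?thesis
      by (simp add: less_eq_div_iff_mult_less_eq mult.commute)
  qed
  then have "(\<Sum>u\<in>UNIV. line_points_off u) \<le> (\<Sum>u\<in>(UNIV :: F2_10 set). 8 * (vs_type P 2 div 4))"
    by (rule sum_mono)
  then have "(\<Sum>u\<in>UNIV. line_points_off u) \<le> 1024 * (8 * (vs_type P 2 div 4))"
    by simp
  then show False
    using sum_line_points_off \<open>vs_type P 2 = 1 \<or> vs_type P 2 = 6\<close> by auto
qed

theorem vs_type_cases:
  "vs_type P = (\<lambda>d. if d = 10 then 1 else 0)
   \<or> vs_type P = (\<lambda>d. if d = 2 then 256 else if d = 8 then 1 else 0)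
   \<or> (\<exists>i::nat. i \<le> 64 \<and>
        vs_type P = (\<lambda>d. if d = 2 then 320 - 5 * i else if d = 4 then i else if d = 6 then 1 else 0))
   \<or> (\<exists>i::nat. i \<le> 66 \<and>
        vs_type P = (\<lambda>d. if d = 2 then 341 - 5 * i else if d = 4 then i else 0))"
proof -
  define i where "i = vs_type P 4"
  consider "vs_type P 10 = 1" | "vs_type P 8 = 1" | "vs_type P 6 = 1"
    | "vs_type P 6 = 0" "vs_type P 8 = 0" "vs_type P 10 = 0"
    using vs_type_6_8_10_le_1 by linarith
  then show ?thesis
  proof cases
    case 1
    then have "vs_type P 2 = 0" "vs_type P 4 = 0" "vs_type P 6 = 0" "vs_type P 8 = 0"
      using nonzero_vector_count by linarith+
    then have "vs_type P = (\<lambda>d. if d = 10 then 1 else 0)"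
      using vs_type_eqI 1 by (simp add: fun_eq_iff)
    then show ?thesis
      by blast
  next
    case 2
    then have "vs_type P 4 = 0" "vs_type P 6 = 0" "vs_type P 10 = 0"
      using vs_type_4_eq_0_if_8 vs_type_6_8_10_le_1 by simp_all
    moreover from this have "vs_type P 2 = 256"
      using nonzero_vector_count 2 by linarith
    ultimately have "vs_type P = (\<lambda>d. if d = 2 then 256 else if d = 8 then 1 else 0)"
      using vs_type_eqI 2 by (simp add: fun_eq_iff)
    then show ?thesis
      by blast
  next
    case 3
    then have "vs_type P 8 = 0" "vs_type P 10 = 0" "i \<le> 64"
      using vs_type_6_8_10_le_1 vs_type_4_le_64_if_6 by (simp_all add: i_def)
    moreover from this have "vs_type P 2 = 320 - 5 * i"
      using nonzero_vector_count 3 unfolding i_def by linarith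
    ultimately have "vs_type P = (\<lambda>d. if d = 2 then 320 - 5 * i else if d = 4 then i
        else if d = 6 then 1 else if d = 8 then 0 else if d = 10 then 0 else 0)"
      using 3 by (intro vs_type_eqI) (simp_all add: i_def)
    then show ?thesis
      using \<open>i \<le> 64\<close> by (auto simp: fun_eq_iff)
  next
    case 4
    then have "i \<le> 66" "vs_type P 2 = 341 - 5 * i"
      using vs_type_4_le_66 nonzero_vector_count by (simp_all add: i_def)
    then have "vs_type P = (\<lambda>d. if d = 2 then 341 - 5 * i else if d = 4 then i
        else if d = 6 then 0 else if d = 8 then 0 else if d = 10 then 0 else 0)"
      using 4 by (intro vs_type_eqI) (simp_all add: i_def)
    then show ?thesis
      using \<open>i \<le> 66\<close> by (auto simp: fun_eq_iff)
  qed
qed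

end

section \<open>Binary polynomials of bounded degree\<close>

definition polys_lt :: "nat \<Rightarrow> bit poly set" where
  "polys_lt n = {p. \<forall>i\<ge>n. coeff p i = 0}"

lemma zero_in_polys_lt [simp]: "0 \<in> polys_lt n"
  by (simp add: polys_lt_def)

lemma mem_polys_lt_iff: "p \<in> polys_lt n \<longleftrightarrow> p = 0 \<or> degree p < n"
proof
  assume p: "p \<in> polys_lt n"
  show "p = 0 \<or> degree p < n"
  proof (rule ccontr)
    assume "\<not> (p = 0 \<or> degree p < n)"
    then show False
      using p leading_coeff_neq_0 [of p] by (auto simp: polys_lt_def)
  qed
next
  assume "p = 0 \<or> degree p < n"
  then show "p \<in> polys_lt n"
    by (cases "p = 0") (auto simp: polys_lt_def intro: coeff_eq_0)
qed

lemma polys_lt_0: "polys_lt 0 = {0}"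
  by (auto simp: polys_lt_def poly_eq_iff)

lemma polys_lt_Suc: "polys_lt (Suc n) = pCons 0 ` polys_lt n \<union> pCons 1 ` polys_lt n"
proof
  show "polys_lt (Suc n) \<subseteq> pCons 0 ` polys_lt n \<union> pCons 1 ` polys_lt n"
  proof
    fix q assume q: "q \<in> polys_lt (Suc n)"
    obtain a p where q_eq: "q = pCons a p"
      by (cases q) auto
    have "p \<in> polys_lt n"
      using q unfolding polys_lt_def q_eq by (auto simp: coeff_pCons split: nat.splits)
    moreover have "a = 0 \<or> a = 1"
      by auto
    ultimately show "q \<in> pCons 0 ` polys_lt n \<union> pCons 1 ` polys_lt n"
      unfolding q_eq by auto
  qed
  show "pCons 0 ` polys_lt n \<union> pCons 1 ` polys_lt n \<subseteq> polys_lt (Suc n)"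
    by (auto simp: polys_lt_def coeff_pCons split: nat.splits)
qed

lemma finite_polys_lt [simp]: "finite (polys_lt n)"
  by (induction n) (simp_all add: polys_lt_0 polys_lt_Suc)

lemma card_polys_lt: "card (polys_lt n) = 2 ^ n"
proof (induction n)
  case 0
  then show ?case
    by (simp add: polys_lt_0)
next
  case (Suc n)
  have "card (polys_lt (Suc n)) = card (pCons 0 ` polys_lt n) + card (pCons 1 ` polys_lt n)"
    unfolding polys_lt_Suc by (rule card_Un_disjoint) auto
  also have "\<dots> = 2 * card (polys_lt n)"
    by (simp add: card_image inj_on_def)
  finally show ?case
    using Suc.IH by simp
qed

lemma bit_poly_minus [simp]: "- (p :: bit poly) = p"
  by (simp add: poly_eq_iff)

lemma bit_poly_add_self [simp]: "(p :: bit poly) + p = 0"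
  by (rule poly_eqI) (simp only: coeff_add coeff_0, simp)

lemma add_polys_lt: "p \<in> polys_lt n \<Longrightarrow> q \<in> polys_lt n \<Longrightarrow> p + q \<in> polys_lt n"
  by (simp add: polys_lt_def)

lemma add_submonoid_polys_lt: "add_submonoid (polys_lt n)"
  by (simp add: add_submonoid_def add_polys_lt)

lemma polys_lt_mono: "k \<le> n \<Longrightarrow> polys_lt k \<subseteq> polys_lt n"
  by (auto simp: polys_lt_def)

lemma mod_in_polys_lt: "degree m = n \<Longrightarrow> m \<noteq> 0 \<Longrightarrow> (a :: bit poly) mod m \<in> polys_lt n"
  using degree_mod_less [of m a] by (auto simp: mem_polys_lt_iff)

lemma monom_mult_in_polys_lt: "r \<in> polys_lt n \<Longrightarrow> monom 1 k * r \<in> polys_lt (k + n)"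
  by (auto simp: polys_lt_def coeff_monom_mult)

lemma poly_cutoff_in_polys_lt: "poly_cutoff k p \<in> polys_lt k"
  by (simp add: polys_lt_def coeff_poly_cutoff)

lemma poly_shift_in_polys_lt: "p \<in> polys_lt (k + n) \<Longrightarrow> poly_shift k p \<in> polys_lt n"
  by (simp add: polys_lt_def coeff_poly_shift add.commute)

lemma poly_cutoff_plus_shift: "poly_cutoff k p + monom 1 k * poly_shift k p = (p :: bit poly)"
proof (rule poly_eqI)
  fix i
  show "coeff (poly_cutoff k p + monom 1 k * poly_shift k p) i = coeff p i"
    by (cases "i < k") (simp_all add: coeff_poly_cutoff coeff_monom_mult coeff_poly_shift)
qed

lemma poly_cutoff_add_monom_mult:
  "a \<in> polys_lt k \<Longrightarrow> poly_cutoff k (a + monom 1 k * b) = (a :: bit poly)"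
  by (rule poly_eqI) (simp add: coeff_poly_cutoff coeff_monom_mult polys_lt_def)

lemma poly_shift_add_monom_mult:
  "a \<in> polys_lt k \<Longrightarrow> poly_shift k (a + monom 1 k * b) = (b :: bit poly)"
  by (rule poly_eqI) (simp add: coeff_poly_shift coeff_monom_mult polys_lt_def)

fun polys_lt_list :: "nat \<Rightarrow> bit poly list" where
  "polys_lt_list 0 = [0]"
| "polys_lt_list (Suc n) = concat (map (\<lambda>p. [pCons 0 p, pCons 1 p]) (polys_lt_list n))"

lemma set_polys_lt_list: "set (polys_lt_list n) = polys_lt n"
  by (induction n) (auto simp: polys_lt_0 polys_lt_Suc)

lemma prime_elem_if_no_small_divisor:
  fixes m :: "'a::field poly"
  assumes "degree m \<ge> 1"
    and no_divisor: "\<And>q. degree q \<ge> 1 \<Longrightarrow> 2 * degree q \<le> degree m \<Longrightarrow> \<not> q dvd m"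
  shows "prime_elem m"
proof (rule field_poly_irreducible_imp_prime, rule irreducibleI)
  show "m \<noteq> 0"
    using assms(1) by auto
  then show "\<not> m dvd 1"
    using assms(1) is_unit_iff_degree [OF \<open>m \<noteq> 0\<close>] by simp
  fix a b assume ab: "m = a * b"
  show "a dvd 1 \<or> b dvd 1"
  proof (rule ccontr)
    assume "\<not> (a dvd 1 \<or> b dvd 1)"
    moreover have "a \<noteq> 0" "b \<noteq> 0"
      using \<open>m \<noteq> 0\<close> ab by auto
    ultimately have "degree a \<ge> 1" "degree b \<ge> 1"
      using is_unit_iff_degree [of a] is_unit_iff_degree [of b] by auto
    moreover have "degree m = degree a + degree b"
      using ab \<open>a \<noteq> 0\<close> \<open>b \<noteq> 0\<close> by (simp add: degree_mult_eq)
    ultimately show False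
      using no_divisor [of a] no_divisor [of b] ab by (cases "2 * degree a \<le> degree m") auto
  qed
qed

lemma prime_elem_by_trial_division:
  fixes m :: "bit poly"
  assumes "1 \<le> degree m" "degree m < 2 * n"
    and "\<forall>q\<in>set (polys_lt_list n). 1 \<le> degree q \<longrightarrow> 2 * degree q \<le> degree m \<longrightarrow> m mod q \<noteq> 0"
  shows "prime_elem m"
proof (rule prime_elem_if_no_small_divisor [OF assms(1)])
  fix q :: "bit poly" assume "degree q \<ge> 1" "2 * degree q \<le> degree m"
  moreover from this have "q \<in> set (polys_lt_list n)"
    using assms(2) by (simp add: set_polys_lt_list mem_polys_lt_iff)
  ultimately show "\<not> q dvd m"
    using assms(3) by (auto simp: dvd_eq_mod_eq_0)
qed

lemma prime_elem_deg_2: "prime_elem [:1, 1, 1 :: bit:]"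
  by (rule prime_elem_by_trial_division [of _ 2]) code_simp+

lemma prime_elem_deg_4: "prime_elem [:1, 1, 0, 0, 1 :: bit:]"
  by (rule prime_elem_by_trial_division [of _ 3]) code_simp+

lemma prime_elem_deg_6: "prime_elem [:1, 1, 0, 0, 0, 0, 1 :: bit:]"
  by (rule prime_elem_by_trial_division [of _ 4]) code_simp+

lemma prime_elem_deg_8: "prime_elem [:1, 1, 0, 1, 1, 0, 0, 0, 1 :: bit:]"
  by (rule prime_elem_by_trial_division [of _ 5]) code_simp+

section \<open>Lifted partitions\<close>

text \<open>Read \<open>polys_lt n\<close> as the field \<open>\<bbbF>\<^sub>2[x]/(m)\<close> with \<open>polys_lt k\<close> inside it, and \<open>polys_lt (k + n)\<close>
  as pairs \<open>(a, b)\<close> written \<open>a + x\<^sup>k b\<close>. Then \<open>graph_space k m c\<close> is the graph of multiplication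
  by \<open>c\<close> on \<open>polys_lt k\<close>, and \<open>tail_space k n\<close> is \<open>0 \<times> polys_lt n\<close>.\<close>

definition lift_map :: "nat \<Rightarrow> bit poly \<Rightarrow> bit poly \<Rightarrow> bit poly \<Rightarrow> bit poly" where
  "lift_map k m c a = a + monom 1 k * ((c * a) mod m)"

definition graph_space :: "nat \<Rightarrow> bit poly \<Rightarrow> bit poly \<Rightarrow> bit poly set" where
  "graph_space k m c = lift_map k m c ` polys_lt k"

definition tail_space :: "nat \<Rightarrow> nat \<Rightarrow> bit poly set" where
  "tail_space k n = (*) (monom 1 k) ` polys_lt n"

definition lifted_partition :: "nat \<Rightarrow> nat \<Rightarrow> bit poly \<Rightarrow> bit poly set set" where
  "lifted_partition k n m = graph_space k m ` polys_lt n \<union> {tail_space k n}"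

lemma lift_map_add: "lift_map k m c (a + b) = lift_map k m c a + lift_map k m c b"
  by (simp add: lift_map_def poly_mod_add_left algebra_simps)

lemma lift_map_0 [simp]: "lift_map k m c 0 = 0"
  by (simp add: lift_map_def)

lemma poly_cutoff_lift_map: "a \<in> polys_lt k \<Longrightarrow> poly_cutoff k (lift_map k m c a) = a"
  unfolding lift_map_def by (rule poly_cutoff_add_monom_mult)

lemma poly_shift_lift_map: "a \<in> polys_lt k \<Longrightarrow> poly_shift k (lift_map k m c a) = (c * a) mod m"
  unfolding lift_map_def by (rule poly_shift_add_monom_mult)

lemma inj_on_lift_map: "inj_on (lift_map k m c) (polys_lt k)"
  by (rule inj_onI) (metis poly_cutoff_lift_map)

lemma card_graph_space: "card (graph_space k m c) = 2 ^ k"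
  unfolding graph_space_def by (simp add: card_image [OF inj_on_lift_map] card_polys_lt)

lemma add_submonoid_graph_space: "add_submonoid (graph_space k m c)"
  unfolding graph_space_def add_submonoid_def
proof (intro conjI ballI)
  show "0 \<in> lift_map k m c ` polys_lt k"
    by (rule image_eqI [of _ _ 0]) simp_all
  fix x y assume "x \<in> lift_map k m c ` polys_lt k" "y \<in> lift_map k m c ` polys_lt k"
  then show "x + y \<in> lift_map k m c ` polys_lt k"
    by (auto simp: lift_map_add [symmetric] add_polys_lt)
qed

lemma card_tail_space: "card (tail_space k n) = 2 ^ n"
proof -
  have "inj_on ((*) (monom 1 k)) (polys_lt n)"
    by (rule inj_onI) simp
  then show ?thesis
    unfolding tail_space_def by (simp add: card_image card_polys_lt)
qed

lemma add_submonoid_tail_space: "add_submonoid (tail_space k n)"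
  unfolding tail_space_def add_submonoid_def
proof (intro conjI ballI)
  show "0 \<in> (*) (monom 1 k) ` polys_lt n"
    by (rule image_eqI [of _ _ 0]) simp_all
  fix x y assume "x \<in> (*) (monom 1 k) ` polys_lt n" "y \<in> (*) (monom 1 k) ` polys_lt n"
  then show "x + y \<in> (*) (monom 1 k) ` polys_lt n"
    by (auto simp: distrib_left [symmetric] add_polys_lt)
qed

lemma graph_tail_inter:
  assumes "p \<in> graph_space k m c" "p \<in> tail_space k n"
  shows "p = 0"
proof -
  obtain a where a: "a \<in> polys_lt k" "p = lift_map k m c a"
    using assms(1) unfolding graph_space_def by blast
  obtain b where "p = monom 1 k * b"
    using assms(2) unfolding tail_space_def by blast
  then have "poly_cutoff k p = 0"
    using poly_cutoff_add_monom_mult [of 0 k b] by simp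
  then have "a = 0"
    using poly_cutoff_lift_map [OF a(1)] a(2) by simp
  then show ?thesis
    using a(2) by simp
qed

locale lifted_setup =
  fixes k n :: nat and m :: "bit poly"
  assumes k_pos: "1 \<le> k" and k_le_n: "k \<le> n" and prime_m: "prime_elem m" and degree_m: "degree m = n"
begin

lemma m_nonzero: "m \<noteq> 0"
  using prime_m by auto

lemma one_in_polys_lt: "1 \<in> polys_lt k"
  using k_pos by (simp add: mem_polys_lt_iff)

lemma not_dvd_mult:
  assumes "a \<in> polys_lt k" "a \<noteq> 0" "c \<in> polys_lt n" "c \<noteq> 0"
  shows "\<not> m dvd c * a"
proof
  assume "m dvd c * a"
  then have "m dvd c \<or> m dvd a"
    using prime_m by (simp add: prime_elem_dvd_mult_iff)
  then show False
  proof
    assume "m dvd c"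
    then have "n \<le> degree c"
      using dvd_imp_degree_le [OF _ assms(4)] degree_m by blast
    then show False
      using assms(3,4) by (simp add: mem_polys_lt_iff)
  next
    assume "m dvd a"
    then have "n \<le> degree a"
      using dvd_imp_degree_le [OF _ assms(2)] degree_m by blast
    then show False
      using assms(1,2) k_le_n by (simp add: mem_polys_lt_iff)
  qed
qed

lemma mult_mod_inj:
  assumes "a \<in> polys_lt k" "a \<noteq> 0" "c \<in> polys_lt n" "c' \<in> polys_lt n"
    and "(c * a) mod m = (c' * a) mod m"
  shows "c = c'"
proof (rule ccontr)
  assume "c \<noteq> c'"
  have "((c + c') * a) mod m = (c' * a) mod m + (c' * a) mod m"
    using assms(5) by (simp add: distrib_right poly_mod_add_left)
  also have "\<dots> = 0"
    by (rule bit_poly_add_self)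
  finally have "((c + c') * a) mod m = 0" .
  then have "m dvd (c + c') * a"
    by (simp add: dvd_eq_mod_eq_0)
  moreover have "c + c' \<in> polys_lt n" "c + c' \<noteq> 0"
    using assms(3,4) \<open>c \<noteq> c'\<close> by (simp_all add: add_polys_lt add_eq_0_iff)
  ultimately show False
    using not_dvd_mult assms(1,2) by blast
qed

lemma mult_mod_surj:
  assumes "a \<in> polys_lt k" "a \<noteq> 0" "b \<in> polys_lt n"
  obtains c where "c \<in> polys_lt n" "(c * a) mod m = b"
proof -
  let ?mult = "\<lambda>c. (c * a) mod m"
  have "inj_on ?mult (polys_lt n)"
  proof (rule inj_onI)
    fix c c' assume "c \<in> polys_lt n" "c' \<in> polys_lt n" "?mult c = ?mult c'"
    then show "c = c'"
      by (rule mult_mod_inj [OF assms(1,2)])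
  qed
  then have "card (?mult ` polys_lt n) = card (polys_lt n)"
    by (rule card_image)
  moreover have "?mult ` polys_lt n \<subseteq> polys_lt n"
    by (rule image_subsetI) (rule mod_in_polys_lt [OF degree_m m_nonzero])
  ultimately have "?mult ` polys_lt n = polys_lt n"
    using card_subset_eq [OF finite_polys_lt] by blast
  then have "b \<in> ?mult ` polys_lt n"
    using assms(3) by simp
  then show ?thesis
    using that by blast
qed

lemma graph_space_subset: "graph_space k m c \<subseteq> polys_lt (k + n)"
  unfolding graph_space_def
proof (rule image_subsetI)
  fix a assume "a \<in> polys_lt k"
  then have "a \<in> polys_lt (k + n)"
    using polys_lt_mono [of k "k + n"] by auto
  moreover have "monom 1 k * ((c * a) mod m) \<in> polys_lt (k + n)"
    by (rule monom_mult_in_polys_lt [OF mod_in_polys_lt [OF degree_m m_nonzero]])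
  ultimately show "lift_map k m c a \<in> polys_lt (k + n)"
    unfolding lift_map_def by (rule add_polys_lt)
qed

lemma tail_space_subset: "tail_space k n \<subseteq> polys_lt (k + n)"
  unfolding tail_space_def by (rule image_subsetI) (rule monom_mult_in_polys_lt)

lemma lift_map_one_nonzero: "lift_map k m c 1 \<noteq> 0"
proof
  assume "lift_map k m c 1 = 0"
  then have "poly_cutoff k (lift_map k m c 1) = 0"
    by simp
  then show False
    using poly_cutoff_lift_map [OF one_in_polys_lt] by simp
qed

lemma graph_space_nonzero: "graph_space k m c \<noteq> {0}"
proof -
  have "lift_map k m c 1 \<in> graph_space k m c"
    unfolding graph_space_def using one_in_polys_lt by (rule imageI)
  then show ?thesis
    using lift_map_one_nonzero [of c] by (metis singletonD)
qed

lemma tail_space_nonzero: "tail_space k n \<noteq> {0}"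
proof -
  have "1 \<in> polys_lt n"
    using k_pos k_le_n by (simp add: mem_polys_lt_iff)
  then have "monom 1 k * 1 \<in> tail_space k n"
    unfolding tail_space_def by (rule imageI)
  moreover have "monom 1 k * 1 \<noteq> (0 :: bit poly)"
    by simp
  ultimately show ?thesis
    by (metis singletonD)
qed

lemma graph_space_unique:
  assumes "p \<in> graph_space k m c" "p \<in> graph_space k m c'" "c \<in> polys_lt n" "c' \<in> polys_lt n"
    and "p \<noteq> 0"
  shows "c = c'"
proof -
  obtain a where a: "a \<in> polys_lt k" "p = lift_map k m c a"
    using assms(1) unfolding graph_space_def by blast
  obtain a' where a': "a' \<in> polys_lt k" "p = lift_map k m c' a'"
    using assms(2) unfolding graph_space_def by blast
  have "a = a'"
    using poly_cutoff_lift_map [OF a(1), of m c] poly_cutoff_lift_map [OF a'(1), of m c'] a(2) a'(2)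
    by simp
  moreover have "a \<noteq> 0"
    using a(2) assms(5) by auto
  moreover have "(c * a) mod m = (c' * a') mod m"
    using poly_shift_lift_map [OF a(1), of m c] poly_shift_lift_map [OF a'(1), of m c'] a(2) a'(2)
    by simp
  ultimately show ?thesis
    using mult_mod_inj a(1) assms(3,4) by blast
qed

lemma inj_on_graph_space: "inj_on (graph_space k m) (polys_lt n)"
proof (rule inj_onI)
  fix c c' assume c: "c \<in> polys_lt n" "c' \<in> polys_lt n" and eq: "graph_space k m c = graph_space k m c'"
  have "lift_map k m c 1 \<in> graph_space k m c"
    unfolding graph_space_def using one_in_polys_lt by blast
  moreover from this have "lift_map k m c 1 \<in> graph_space k m c'"
    by (simp only: eq)
  ultimately show "c = c'"
    using graph_space_unique c lift_map_one_nonzero by blast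
qed

lemma tail_space_notin: "tail_space k n \<notin> graph_space k m ` polys_lt n"
proof
  assume "tail_space k n \<in> graph_space k m ` polys_lt n"
  then obtain c where "tail_space k n = graph_space k m c"
    by blast
  moreover have "lift_map k m c 1 \<in> graph_space k m c"
    unfolding graph_space_def using one_in_polys_lt by blast
  ultimately show False
    using graph_tail_inter [of "lift_map k m c 1" k m c n] lift_map_one_nonzero by simp
qed

lemma member_lifted_partition_cases:
  assumes "V \<in> lifted_partition k n m"
  obtains "V = tail_space k n" | c where "c \<in> polys_lt n" "V = graph_space k m c"
  using assms unfolding lifted_partition_def by blast

lemma lifted_partition_cover:
  assumes "p \<in> polys_lt (k + n)" "p \<noteq> 0"
  shows "\<exists>V\<in>lifted_partition k n m. p \<in> V"
proof -
  define a b where "a = poly_cutoff k p" and "b = poly_shift k p"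
  have a: "a \<in> polys_lt k" and b: "b \<in> polys_lt n"
    using assms(1) by (simp_all add: a_def b_def poly_cutoff_in_polys_lt poly_shift_in_polys_lt)
  have p_eq: "p = a + monom 1 k * b"
    by (simp add: a_def b_def poly_cutoff_plus_shift)
  show ?thesis
  proof (cases "a = 0")
    case True
    then have "p \<in> tail_space k n"
      unfolding tail_space_def using p_eq b by simp
    then show ?thesis
      unfolding lifted_partition_def by blast
  next
    case False
    then obtain c where "c \<in> polys_lt n" "(c * a) mod m = b"
      using mult_mod_surj a b by blast
    then have "p \<in> graph_space k m c"
      unfolding graph_space_def lift_map_def using a p_eq by blast
    then show ?thesis
      unfolding lifted_partition_def using \<open>c \<in> polys_lt n\<close> by blast
  qed
qed

lemma lifted_partition_unique:
  assumes "V \<in> lifted_partition k n m" "W \<in> lifted_partition k n m" "p \<in> V" "p \<in> W" "p \<noteq> 0"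
  shows "V = W"
  using assms(1)
proof (cases rule: member_lifted_partition_cases)
  case V_tail: 1
  from assms(2) show ?thesis
  proof (cases rule: member_lifted_partition_cases)
    case (2 c')
    then show ?thesis
      using graph_tail_inter assms(3-5) V_tail by blast
  qed (use V_tail in simp)
next
  case V_graph: (2 c)
  from assms(2) show ?thesis
  proof (cases rule: member_lifted_partition_cases)
    case 1
    then show ?thesis
      using graph_tail_inter assms(3-5) V_graph by blast
  next
    case (2 c')
    then show ?thesis
      using graph_space_unique assms(3-5) V_graph by blast
  qed
qed

theorem space_partition_lifted: "space_partition (polys_lt (k + n)) (lifted_partition k n m)"
proof (rule space_partitionI)
  fix V assume "V \<in> lifted_partition k n m"
  then show "add_submonoid V \<and> V \<noteq> {0} \<and> V \<subseteq> polys_lt (k + n)"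
    by (cases rule: member_lifted_partition_cases)
      (simp_all add: add_submonoid_graph_space graph_space_nonzero graph_space_subset
        add_submonoid_tail_space tail_space_nonzero tail_space_subset)
qed (simp_all add: lifted_partition_cover lifted_partition_unique)

theorem space_type_lifted:
  "space_type (lifted_partition k n m) d = (if d = k then 2 ^ n else 0) + (if d = n then 1 else 0)"
proof -
  have "space_type (lifted_partition k n m) d
      = space_type (graph_space k m ` polys_lt n) d + space_type {tail_space k n} d"
    unfolding lifted_partition_def by (rule space_type_Un) (use tail_space_notin in auto)
  also have "space_type (graph_space k m ` polys_lt n) d
      = (if d = k then card (graph_space k m ` polys_lt n) else 0)"
    by (rule space_type_const) (auto simp: card_graph_space)
  also have "card (graph_space k m ` polys_lt n) = 2 ^ n"
    by (simp add: card_image [OF inj_on_graph_space] card_polys_lt)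
  also have "space_type {tail_space k n} d = (if d = n then 1 else 0)"
    using space_type_const [of "{tail_space k n}" n d] card_tail_space by simp
  finally show ?thesis .
qed

end

lemma space_partition_shift:
  assumes "space_partition (polys_lt n) R"
  shows "space_partition (tail_space k n) ((`) ((*) (monom 1 k)) ` R)"
  unfolding tail_space_def
  by (rule space_partition_image [OF _ _ assms]) (simp_all add: distrib_left inj_on_def)

lemma space_type_shift:
  assumes "space_partition (polys_lt n) R"
  shows "space_type ((`) ((*) (monom 1 k)) ` R) d = space_type R d"
  by (rule space_type_image [OF _ assms]) (simp add: inj_on_def)

section \<open>Partitions of the admissible types\<close>

lemma lifted_setup_2_2: "lifted_setup 2 2 [:1, 1, 1:]"
  by unfold_locales (simp_all add: prime_elem_deg_2)

lemma lifted_setup_2_4: "lifted_setup 2 4 [:1, 1, 0, 0, 1:]"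
  by unfold_locales (simp_all add: prime_elem_deg_4)

lemma lifted_setup_4_6: "lifted_setup 4 6 [:1, 1, 0, 0, 0, 0, 1:]"
  by unfold_locales (simp_all add: prime_elem_deg_6)

lemma lifted_setup_2_8: "lifted_setup 2 8 [:1, 1, 0, 1, 1, 0, 0, 0, 1:]"
  by unfold_locales (simp_all add: prime_elem_deg_8)

definition spread_4 :: "bit poly set set" where
  "spread_4 = lifted_partition 2 2 [:1, 1, 1:]"

definition partition_6 :: "bit poly set set" where
  "partition_6 = lifted_partition 2 4 [:1, 1, 0, 0, 1:]"

definition spread_6 :: "bit poly set set" where
  "spread_6 = (partition_6 - {tail_space 2 4}) \<union> (`) ((*) (monom 1 2)) ` spread_4"

lemma space_partition_spread_4: "space_partition (polys_lt 4) spread_4"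
  using lifted_setup.space_partition_lifted [OF lifted_setup_2_2] by (simp add: spread_4_def)

lemma space_type_spread_4: "space_type spread_4 d = (if d = 2 then 5 else 0)"
  using lifted_setup.space_type_lifted [OF lifted_setup_2_2] by (simp add: spread_4_def)

lemma space_partition_partition_6: "space_partition (polys_lt 6) partition_6"
  using lifted_setup.space_partition_lifted [OF lifted_setup_2_4] by (simp add: partition_6_def)

lemma space_type_partition_6:
  "space_type partition_6 d = (if d = 2 then 16 else 0) + (if d = 4 then 1 else 0)"
  using lifted_setup.space_type_lifted [OF lifted_setup_2_4] by (simp add: partition_6_def)

lemma tail_space_in_partition_6: "tail_space 2 4 \<in> partition_6"
  by (simp add: partition_6_def lifted_partition_def)

lemma space_partition_spread_6: "space_partition (polys_lt 6) spread_6"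
  unfolding spread_6_def
  by (rule space_partition_replace [OF space_partition_partition_6 tail_space_in_partition_6
        space_partition_shift [OF space_partition_spread_4]])

lemma space_type_spread_6: "space_type spread_6 d = (if d = 2 then 21 else 0)"
  unfolding spread_6_def
  using space_type_replace [OF space_partition_partition_6 tail_space_in_partition_6
        space_partition_shift [OF space_partition_spread_4] _ _ card_tail_space]
    finite_space_partition [OF space_partition_partition_6]
    finite_space_partition [OF space_partition_spread_4]
    space_type_shift [OF space_partition_spread_4] space_type_partition_6 space_type_spread_4
  by simp

text \<open>Starting from the lifted partition of type \<open>[4\<^sup>6\<^sup>4, 6\<^sup>1]\<close>, \<open>partition_10 C\<close> splits the blocks
  \<open>graph_space 4 m c\<close> with \<open>c \<in> C\<close> into five lines each; \<open>partition_10_tail C R\<close> moreover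
  replaces the 6-dimensional tail block by a copy of the partition \<open>R\<close> of \<open>polys_lt 6\<close>.\<close>

definition partition_10 :: "bit poly set \<Rightarrow> bit poly set set" where
  "partition_10 C = (lifted_partition 4 6 [:1, 1, 0, 0, 0, 0, 1:] - graph_space 4 [:1, 1, 0, 0, 0, 0, 1:] ` C)
     \<union> (\<Union>c\<in>C. (`) (lift_map 4 [:1, 1, 0, 0, 0, 0, 1:] c) ` spread_4)"

definition partition_10_tail :: "bit poly set \<Rightarrow> bit poly set set \<Rightarrow> bit poly set set" where
  "partition_10_tail C R = (partition_10 C - {tail_space 4 6}) \<union> (`) ((*) (monom 1 4)) ` R"

lemma space_partition_graph_refinement:
  "space_partition (graph_space 4 [:1, 1, 0, 0, 0, 0, 1:] c) ((`) (lift_map 4 [:1, 1, 0, 0, 0, 0, 1:] c) ` spread_4)"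
  unfolding graph_space_def
  by (rule space_partition_image [OF lift_map_add inj_on_lift_map space_partition_spread_4])

context
  fixes C :: "bit poly set"
  assumes C: "C \<subseteq> polys_lt 6"
begin

lemma space_partition_partition_10: "space_partition (polys_lt 10) (partition_10 C)"
  unfolding partition_10_def
  using lifted_setup.space_partition_lifted [OF lifted_setup_4_6] lifted_setup.inj_on_graph_space [OF lifted_setup_4_6] C
  by (intro space_partition_refine space_partition_graph_refinement)
    (auto simp: lifted_partition_def intro: inj_on_subset)

lemma space_type_partition_10:
  "space_type (partition_10 C) d
     = (if d = 2 then 5 * card C else 0) + (if d = 4 then 64 - card C else 0) + (if d = 6 then 1 else 0)"
proof -
  let ?m = "[:1, 1, 0, 0, 0, 0, 1 :: bit:]"
  have finite_C: "finite C"
    using C finite_polys_lt by (rule finite_subset)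
  have inj: "inj_on (graph_space 4 ?m) C"
    using lifted_setup.inj_on_graph_space [OF lifted_setup_4_6] C by (rule inj_on_subset)
  have "space_type (partition_10 C) d = space_type (lifted_partition 4 6 ?m) d
      - space_type (graph_space 4 ?m ` C) d + (\<Sum>c\<in>C. space_type ((`) (lift_map 4 ?m c) ` spread_4) d)"
    unfolding partition_10_def
    using lifted_setup.space_partition_lifted [OF lifted_setup_4_6] C inj finite_C
    by (intro space_type_refine space_partition_graph_refinement)
      (auto simp: lifted_partition_def spread_4_def)
  also have "space_type (graph_space 4 ?m ` C) d = (if d = 4 then card (graph_space 4 ?m ` C) else 0)"
    by (rule space_type_const) (auto simp: card_graph_space)
  also have "card (graph_space 4 ?m ` C) = card C"
    by (rule card_image [OF inj])
  also have "(\<Sum>c\<in>C. space_type ((`) (lift_map 4 ?m c) ` spread_4) d) = (\<Sum>c\<in>C. if d = 2 then 5 else 0)"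
    using space_type_image [OF inj_on_lift_map space_partition_spread_4] space_type_spread_4 by simp
  finally show ?thesis
    using lifted_setup.space_type_lifted [OF lifted_setup_4_6] by simp
qed

lemma tail_space_in_partition_10: "tail_space 4 6 \<in> partition_10 C"
  using lifted_setup.tail_space_notin [OF lifted_setup_4_6] C
  by (auto simp: partition_10_def lifted_partition_def)

lemma finite_partition_10: "finite (partition_10 C)"
  unfolding partition_10_def
  using finite_subset [OF C finite_polys_lt] finite_space_partition [OF space_partition_spread_4]
    lifted_setup.space_partition_lifted [OF lifted_setup_4_6]
  by (simp add: finite_space_partition)

lemma space_partition_partition_10_tail:
  "space_partition (polys_lt 6) R \<Longrightarrow> space_partition (polys_lt 10) (partition_10_tail C R)"
  unfolding partition_10_tail_def
  by (rule space_partition_replace [OF space_partition_partition_10 tail_space_in_partition_10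
        space_partition_shift])

lemma space_type_partition_10_tail:
  assumes "space_partition (polys_lt 6) R"
  shows "space_type (partition_10_tail C R) d
    = space_type (partition_10 C) d - (if d = 6 then 1 else 0) + space_type R d"
  unfolding partition_10_tail_def
  using space_type_replace [OF space_partition_partition_10 tail_space_in_partition_10
      space_partition_shift [OF assms] finite_partition_10 _ card_tail_space]
    finite_space_partition [OF assms] space_type_shift [OF assms]
  by simp

end

lemma polys_lt_10_iso:
  obtains \<phi> :: "bit poly \<Rightarrow> F2_10"
  where "\<And>p q. \<phi> (p + q) = \<phi> p + \<phi> q" "inj_on \<phi> (polys_lt 10)" "\<phi> ` polys_lt 10 = UNIV"
proof -
  obtain h :: "nat \<Rightarrow> 10" where h: "bij_betw h {0..<10} UNIV"
    using ex_bij_betw_nat_finite [of "UNIV :: 10 set"] by auto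
  define \<phi> where "\<phi> p = (\<chi> j. coeff p (inv_into {0..<10} h j))" for p :: "bit poly"
  have add: "\<phi> (p + q) = \<phi> p + \<phi> q" for p q
    by (simp add: \<phi>_def vec_eq_iff)
  have "inj_on \<phi> (polys_lt 10)"
  proof (rule inj_onI)
    fix p q assume p: "p \<in> polys_lt 10" and q: "q \<in> polys_lt 10" and "\<phi> p = \<phi> q"
    show "p = q"
    proof (rule poly_eqI)
      fix i
      show "coeff p i = coeff q i"
      proof (cases "i < 10")
        case True
        then have "inv_into {0..<10} h (h i) = i"
          using bij_betw_imp_inj_on [OF h] by simp
        moreover have "\<phi> p $ h i = \<phi> q $ h i"
          using \<open>\<phi> p = \<phi> q\<close> by simp
        ultimately show ?thesis
          by (simp add: \<phi>_def)
      next
        case False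
        then show ?thesis
          using p q by (simp add: polys_lt_def)
      qed
    qed
  qed
  moreover from this have "\<phi> ` polys_lt 10 = UNIV"
    by (simp add: card_subset_eq card_image card_polys_lt)
  ultimately show ?thesis
    using add that by blast
qed

lemma exists_vs_partition_of_type:
  assumes "space_partition (polys_lt 10) P" "\<And>d. space_type P d = \<tau> d"
  shows "\<exists>P'. vs_partition P' \<and> vs_type P' = \<tau>"
proof -
  obtain \<phi> :: "bit poly \<Rightarrow> F2_10"
    where add: "\<And>p q. \<phi> (p + q) = \<phi> p + \<phi> q" and inj: "inj_on \<phi> (polys_lt 10)"
      and onto: "\<phi> ` polys_lt 10 = UNIV"
    by (rule polys_lt_10_iso) blast
  have "vs_partition ((`) \<phi> ` P)"
    using space_partition_image [OF add inj assms(1)] onto by (simp add: vs_partition_iff_space_partition)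
  moreover have "vs_type ((`) \<phi> ` P) = \<tau>"
    using vs_type_eq_space_type [OF \<open>vs_partition ((`) \<phi> ` P)\<close>] space_type_image [OF inj assms(1)] assms(2)
    by auto
  ultimately show ?thesis
    by blast
qed

lemma exists_vs_partition_10: "\<exists>P. vs_partition P \<and> vs_type P = (\<lambda>d. if d = 10 then 1 else 0)"
proof (rule exists_vs_partition_of_type)
  show "space_partition (polys_lt 10) {polys_lt 10}"
  proof (rule space_partitionI)
    have "1 \<in> polys_lt 10"
      by (simp add: mem_polys_lt_iff)
    then show "add_submonoid V \<and> V \<noteq> {0} \<and> V \<subseteq> polys_lt 10" if "V \<in> {polys_lt 10}" for V
      using that add_submonoid_polys_lt by auto
  qed auto
  show "space_type {polys_lt 10} d = (if d = 10 then 1 else 0)" for d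
    using space_type_const [of "{polys_lt 10}" 10 d] card_polys_lt by simp
qed

lemma exists_vs_partition_2_8:
  "\<exists>P. vs_partition P \<and> vs_type P = (\<lambda>d. if d = 2 then 256 else if d = 8 then 1 else 0)"
  by (rule exists_vs_partition_of_type [OF lifted_setup.space_partition_lifted [OF lifted_setup_2_8, simplified]])
    (simp add: lifted_setup.space_type_lifted [OF lifted_setup_2_8])

lemma exists_vs_partition_2_4_6:
  assumes "i \<le> 64"
  shows "\<exists>P. vs_partition P \<and>
    vs_type P = (\<lambda>d. if d = 2 then 320 - 5 * i else if d = 4 then i else if d = 6 then 1 else 0)"
proof -
  obtain C where C: "C \<subseteq> polys_lt 6" "card C = 64 - i"
    using obtain_subset_with_card_n [of "64 - i" "polys_lt 6"] card_polys_lt [of 6] by auto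
  show ?thesis
    by (rule exists_vs_partition_of_type [OF space_partition_partition_10 [OF C(1)]])
      (use assms in \<open>simp add: space_type_partition_10 [OF C(1)] C(2) diff_mult_distrib2\<close>)
qed

lemma exists_vs_partition_2_4:
  assumes "i \<le> 65"
  shows "\<exists>P. vs_partition P \<and> vs_type P = (\<lambda>d. if d = 2 then 341 - 5 * i else if d = 4 then i else 0)"
proof (cases "i = 65")
  case True
  show ?thesis
    by (rule exists_vs_partition_of_type
        [OF space_partition_partition_10_tail [OF empty_subsetI space_partition_partition_6]])
      (use True in \<open>simp add: space_type_partition_10_tail [OF empty_subsetI space_partition_partition_6]
        space_type_partition_10 [OF empty_subsetI] space_type_partition_6\<close>)
next
  case False
  obtain C where C: "C \<subseteq> polys_lt 6" "card C = 64 - i"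
    using obtain_subset_with_card_n [of "64 - i" "polys_lt 6"] card_polys_lt [of 6] by auto
  show ?thesis
    by (rule exists_vs_partition_of_type
        [OF space_partition_partition_10_tail [OF C(1) space_partition_spread_6]])
      (use assms False in \<open>simp add: space_type_partition_10_tail [OF C(1) space_partition_spread_6]
        space_type_partition_10 [OF C(1)] space_type_spread_6 C(2) diff_mult_distrib2\<close>)
qed

theorem mainTheorem11:
  shows
  "(\<forall>P. vs_partition P \<and> (\<forall>V\<in>P. even (vec.dim V)) \<longrightarrow>
       vs_type P = (\<lambda>d. if d = 10 then 1 else 0)
     \<or> vs_type P = (\<lambda>d. if d = 2 then 256 else if d = 8 then 1 else 0)
     \<or> (\<exists>i::nat. i \<le> 64 \<and>
          vs_type P = (\<lambda>d. if d = 2 then 320 - 5 * i else if d = 4 then i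
                           else if d = 6 then 1 else 0))
     \<or> (\<exists>i::nat. i \<le> 66 \<and>
          vs_type P = (\<lambda>d. if d = 2 then 341 - 5 * i else if d = 4 then i else 0)))
   \<and> (\<exists>P. vs_partition P \<and> vs_type P = (\<lambda>d. if d = 10 then 1 else 0))
   \<and> (\<exists>P. vs_partition P \<and> vs_type P = (\<lambda>d. if d = 2 then 256 else if d = 8 then 1 else 0))
   \<and> (\<forall>i::nat. i \<le> 64 \<longrightarrow> (\<exists>P. vs_partition P \<and>
          vs_type P = (\<lambda>d. if d = 2 then 320 - 5 * i else if d = 4 then i
                           else if d = 6 then 1 else 0)))
   \<and> (\<forall>i::nat. i \<le> 65 \<longrightarrow> (\<exists>P. vs_partition P \<and>
          vs_type P = (\<lambda>d. if d = 2 then 341 - 5 * i else if d = 4 then i else 0)))"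
  using even_vs_partition.vs_type_cases [unfolded even_vs_partition_def] exists_vs_partition_10
    exists_vs_partition_2_8 exists_vs_partition_2_4_6 exists_vs_partition_2_4
  by blast

end
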